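(* For the client-server mechanism with parameters $\sigma\in(0,1)$, $c>0$, $q\in(0,1)$, for every initial state $\theta(0)\in\mathbb{R}^N$ and every $b\in(0,1)$, with probability at least $1-b$ the limits $\lim_{t\to\infty}\theta_i(t)$ exist, are equal for all $i\in[N]$ to a common value $\theta^*$, and $$\Big|\theta^*-\frac1N\sum_{i=1}^N\theta_i(0)\Big|\le r,\qquad r=\frac{\sqrt2\,c\,\sigma}{\sqrt{bN(1-q^2)}}.$$ That is, the mechanism achieves $(b,r)$-accuracy.
   Context: Client-server mechanism with parameters $\sigma\in(0,1)$, $c>0$, $q\in(0,1)$: $N$ clients with real initial states $\theta_1(0),\dots,\theta_N(0)$ and one server. At each round $t=0,1,2,\dots$: client $i$ sends $x_i(t)=\theta_i(t)+\eta_i(t)$, where the $\eta_i(t)$ ($i\in[N],t\ge0$) are mutually independent, Laplace distributed with density $\frac{1}{2cq^t}e^{-|x|/(cq^t)}$ (mean $0$, variance $2c^2q^{2t}$); the server sets $y(t)=\frac1N\sum_{i=1}^N x_i(t)$ and sends it to all clients; each client updates $\theta_i(t+1)=(1-\sigma)\theta_i(t)+\sigma y(t)$. A mechanism achieves $(b,r)$-accuracy from $\theta(0)$ if with probability at least $1-b$ the execution converges to a consensus state within distance $r$ of the (appropriate) average of the initial values. *)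

theory Defs
  imports "HOL-Probability.Probability"
begin

definition laplace_density :: "real \<Rightarrow> real \<Rightarrow> real" where
  "laplace_density s x = exp (- \<bar>x\<bar> / s) / (2 * s)"

text \<open>State of the client-server mechanism. Clients are indexed by i < N.
  cs_state N \<sigma> \<theta>0 \<eta> t i is theta_i(t), where \<eta> i t is the noise added by client i
  at round t.\<close>
primrec cs_state :: "nat \<Rightarrow> real \<Rightarrow> (nat \<Rightarrow> real) \<Rightarrow> (nat \<Rightarrow> nat \<Rightarrow> real) \<Rightarrow> nat \<Rightarrow> nat \<Rightarrow> real" where
  "cs_state N \<sigma> \<theta>0 \<eta> 0 i = \<theta>0 i"
| "cs_state N \<sigma> \<theta>0 \<eta> (Suc t) i =
     (1 - \<sigma>) * cs_state N \<sigma> \<theta>0 \<eta> t i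
     + \<sigma> * ((\<Sum>j<N. cs_state N \<sigma> \<theta>0 \<eta> t j + \<eta> j t) / real N)"

end

theory Submission
  imports Defs
begin

(* Writing m for the average of the initial values, the recursion
   unrolls to the closed form
     theta_i(t) = m + (sigma/N) * S(t) + (1 - sigma)^t * (theta_i(0) - m),
   where S(t) is the total noise sent in rounds 0..t-1.  Hence all clients reach
   a common limit within distance r of m exactly when (sigma/N) * S(t) converges
   to a limit of absolute value at most r.
   The noise terms are independent, centred, with E|eta_i(t)| = c q^t and
   E eta_i(t)^2 = 2 c^2 q^(2t).  Summability of the first moments gives almost
   sure convergence of S(t); the second moments add up to at most
   N * 2 c^2 / (1 - q^2), so Chebyshev's inequality bounds every tail
   P(|(sigma/N) S(t)| > r) by b.  A general lemma turns "converges almost surely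
   and every tail probability is at most b" into "the limit lies in [-r, r] with
   probability at least 1 - b". *)

section \<open>Moments of the Laplace distribution\<close>

lemma laplace_density_nonneg: "0 < s \<Longrightarrow> 0 \<le> laplace_density s x"
  by (simp add: laplace_density_def)

lemma laplace_density_measurable[measurable]: "laplace_density s \<in> borel_measurable borel"
  unfolding laplace_density_def[abs_def] by measurable

text \<open>Away from the origin, the Laplace density weighted by \<open>\<bar>x\<bar>^k\<close> is the sum of two
  mirrored halves of the Erlang (here: exponential) density weighted by \<open>x^k\<close>;
  this reduces Laplace moments to the library's Erlang moments.\<close>
lemma laplace_moment_as_erlang_halves:
  assumes s: "0 < s" and k: "k \<ge> 1"
  shows "ennreal (laplace_density s x * \<bar>x\<bar>^k) =
     ennreal (erlang_density 0 (1/s) x * x^k / 2)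
   + ennreal (erlang_density 0 (1/s) (0 + -1 * x) * (0 + -1 * x)^k / 2)"
proof -
  consider "x > 0" | "x < 0" | "x = 0" by linarith
  then show ?thesis
  proof cases
    case 1
    then show ?thesis using s
      by (simp add: laplace_density_def erlang_density_def ennreal_mult'[symmetric] field_simps)
  next
    case 2
    then have "(-x)^k = \<bar>x\<bar>^k" by simp
    then show ?thesis using s 2
      by (simp add: laplace_density_def erlang_density_def ennreal_mult'[symmetric] field_simps)
  next
    case 3
    then show ?thesis using k by (simp add: zero_power)
  qed
qed

lemma laplace_abs_moment:
  assumes s: "0 < s" and k: "k \<ge> 1"
  shows "(\<integral>\<^sup>+x. ennreal (laplace_density s x * \<bar>x\<bar>^k) \<partial>lborel) = ennreal (fact k * s^k)"
proof -
  define h where "h x = ennreal (erlang_density 0 (1/s) x * x^k / 2)" for x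
  have h_meas[measurable]: "h \<in> borel_measurable borel" unfolding h_def[abs_def] by measurable
  have half: "(\<integral>\<^sup>+x. h x \<partial>lborel) = ennreal (fact k * s^k / 2)"
  proof -
    have "(\<integral>\<^sup>+x. h x \<partial>lborel)
        = (\<integral>\<^sup>+x. ennreal (erlang_density 0 (1/s) x * x^k) * ennreal (1/2) \<partial>lborel)"
      unfolding h_def using s
      by (intro nn_integral_cong)
        (simp add: ennreal_mult'[symmetric] erlang_density_def zero_le_mult_iff del: ennreal_half)
    also have "\<dots> = (\<integral>\<^sup>+x. ennreal (erlang_density 0 (1/s) x * x^k) \<partial>lborel) * ennreal (1/2)"
      by (rule nn_integral_multc) measurable
    also have "\<dots> = ennreal (fact k / (fact 0 * (1/s)^k)) * ennreal (1/2)"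
      using s nn_integral_erlang_ith_moment[of "1/s" 0 k] by (simp del: ennreal_half)
    also have "\<dots> = ennreal (fact k * s^k / 2)"
      using s by (simp add: ennreal_mult'[symmetric] field_simps power_one_over del: ennreal_half)
    finally show ?thesis .
  qed
  have mirrored: "(\<integral>\<^sup>+x. h (0 + -1 * x) \<partial>lborel) = (\<integral>\<^sup>+x. h x \<partial>lborel)"
    using nn_integral_real_affine[OF h_meas, of "-1" 0] by simp
  have "(\<integral>\<^sup>+x. ennreal (laplace_density s x * \<bar>x\<bar>^k) \<partial>lborel)
      = (\<integral>\<^sup>+x. h x + h (0 + -1 * x) \<partial>lborel)"
    using laplace_moment_as_erlang_halves[OF s k] unfolding h_def by simp
  also have "\<dots> = (\<integral>\<^sup>+x. h x \<partial>lborel) + (\<integral>\<^sup>+x. h (0 + -1 * x) \<partial>lborel)"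
    by (rule nn_integral_add) measurable
  also have "\<dots> = ennreal (fact k * s^k)"
    unfolding mirrored half using s by (simp add: ennreal_plus[symmetric] del: ennreal_plus)
  finally show ?thesis .
qed

lemma laplace_moment_integrable:
  assumes s: "0 < s" and k: "k \<ge> 1"
  shows "integrable lborel (\<lambda>x. laplace_density s x * x^k)"
proof (rule integrableI_bounded)
  have "(\<integral>\<^sup>+x. ennreal (norm (laplace_density s x * x^k)) \<partial>lborel)
      = (\<integral>\<^sup>+x. ennreal (laplace_density s x * \<bar>x\<bar>^k) \<partial>lborel)"
    using s by (intro nn_integral_cong) (simp add: abs_mult power_abs laplace_density_nonneg)
  then show "(\<integral>\<^sup>+x. ennreal (norm (laplace_density s x * x^k)) \<partial>lborel) < \<infinity>"
    using laplace_abs_moment[OF s k] by simp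
qed measurable

text \<open>The Laplace density is even, so its first moment vanishes.\<close>
lemma laplace_first_moment:
  "(\<integral>x. laplace_density s x * x \<partial>lborel) = 0"
proof -
  have "(\<integral>x. laplace_density s x * x \<partial>lborel)
      = \<bar>-1\<bar> *\<^sub>R (\<integral>x. laplace_density s (0 + -1*x) * (0 + -1*x) \<partial>lborel)"
    by (rule lborel_integral_real_affine) simp
  also have "\<dots> = - (\<integral>x. laplace_density s x * x \<partial>lborel)"
    by (simp add: laplace_density_def)
  finally show ?thesis by simp
qed

lemma laplace_second_moment:
  assumes s: "0 < s"
  shows "(\<integral>x. laplace_density s x * x^2 \<partial>lborel) = 2 * s^2"
proof -
  have "ennreal (\<integral>x. laplace_density s x * x^2 \<partial>lborel)
      = (\<integral>\<^sup>+x. ennreal (laplace_density s x * \<bar>x\<bar>^2) \<partial>lborel)"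
    using s by (subst nn_integral_eq_integral)
      (auto intro: laplace_moment_integrable simp: laplace_density_nonneg)
  also have "\<dots> = ennreal (2 * s^2)" using laplace_abs_moment[OF s, of 2] by simp
  finally show ?thesis using s
    by (subst (asm) ennreal_inj) (auto intro!: integral_nonneg_AE simp: laplace_density_nonneg)
qed

lemma (in prob_space) laplace_distributed_moments:
  assumes d: "distributed M lborel X (\<lambda>x. ennreal (laplace_density s x))" and s: "0 < s"
  shows "random_variable borel X"
    and "integrable M X" and "expectation X = 0"
    and "integrable M (\<lambda>\<omega>. (X \<omega>)^2)" and "expectation (\<lambda>\<omega>. (X \<omega>)^2) = 2 * s^2"
    and "(\<integral>\<^sup>+\<omega>. ennreal \<bar>X \<omega>\<bar> \<partial>M) = ennreal s"
proof -
  show "random_variable borel X"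
    using distributed_measurable[OF d] by (simp add: measurable_lborel1)
  show "integrable M X"
    using distributed_integrable[OF d, of "\<lambda>x. x"] laplace_moment_integrable[OF s, of 1] s
    by (simp add: laplace_density_nonneg)
  show "expectation X = 0"
    using distributed_integral[OF d, of "\<lambda>x. x"] laplace_first_moment s
    by (simp add: laplace_density_nonneg)
  show "integrable M (\<lambda>\<omega>. (X \<omega>)^2)"
    using distributed_integrable[OF d, of "\<lambda>x. x^2"] laplace_moment_integrable[OF s, of 2] s
    by (simp add: laplace_density_nonneg)
  show "expectation (\<lambda>\<omega>. (X \<omega>)^2) = 2 * s^2"
    using distributed_integral[OF d, of "\<lambda>x. x^2"] laplace_second_moment[OF s] s
    by (simp add: laplace_density_nonneg)
  have "(\<integral>\<^sup>+x. ennreal (laplace_density s x) * ennreal \<bar>x\<bar> \<partial>lborel) = (\<integral>\<^sup>+\<omega>. ennreal \<bar>X \<omega>\<bar> \<partial>M)"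
    by (rule distributed_nn_integral[OF d]) measurable
  moreover have "(\<integral>\<^sup>+x. ennreal (laplace_density s x) * ennreal \<bar>x\<bar> \<partial>lborel) = ennreal s"
    using laplace_abs_moment[OF s, of 1] s by (simp add: ennreal_mult'[symmetric] laplace_density_nonneg)
  ultimately show "(\<integral>\<^sup>+\<omega>. ennreal \<bar>X \<omega>\<bar> \<partial>M) = ennreal s" by simp
qed

section \<open>Second moment of a sum of independent centred variables\<close>

context prob_space
begin

lemma indep_vars_product_pair:
  fixes Y :: "'i \<Rightarrow> 'a \<Rightarrow> real"
  assumes ind: "indep_vars (\<lambda>_. borel) Y I" and kl: "k \<in> I" "l \<in> I" "k \<noteq> l"
    and int: "integrable M (Y k)" "integrable M (Y l)"
  shows "integrable M (\<lambda>\<omega>. Y k \<omega> * Y l \<omega>)"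
    and "expectation (\<lambda>\<omega>. Y k \<omega> * Y l \<omega>) = expectation (Y k) * expectation (Y l)"
proof -
  have ind2: "indep_vars (\<lambda>_. borel) Y {k, l}"
    using ind kl by (rule_tac indep_vars_subset) auto
  have "integrable M (\<lambda>\<omega>. \<Prod>i\<in>{k,l}. Y i \<omega>)"
    using ind2 int by (intro indep_vars_integrable) auto
  then show "integrable M (\<lambda>\<omega>. Y k \<omega> * Y l \<omega>)" using kl by simp
  have "expectation (\<lambda>\<omega>. \<Prod>i\<in>{k,l}. Y i \<omega>) = (\<Prod>i\<in>{k,l}. expectation (Y i))"
    using ind2 int by (intro indep_vars_lebesgue_integral) auto
  then show "expectation (\<lambda>\<omega>. Y k \<omega> * Y l \<omega>) = expectation (Y k) * expectation (Y l)"
    using kl by simp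
qed

text \<open>For independent, centred, square integrable variables the cross terms of
  \<open>(\<Sum>k. Y k)^2\<close> have expectation zero, so second moments add up.\<close>
lemma indep_centred_sum_second_moment:
  fixes Y :: "'i \<Rightarrow> 'a \<Rightarrow> real"
  assumes ind: "indep_vars (\<lambda>_. borel) Y I" and K: "finite K" "K \<subseteq> I"
    and int: "\<And>k. k \<in> K \<Longrightarrow> integrable M (Y k)"
    and centred: "\<And>k. k \<in> K \<Longrightarrow> expectation (Y k) = 0"
    and int2: "\<And>k. k \<in> K \<Longrightarrow> integrable M (\<lambda>\<omega>. (Y k \<omega>)^2)"
  shows "integrable M (\<lambda>\<omega>. (\<Sum>k\<in>K. Y k \<omega>)^2)"
    and "expectation (\<lambda>\<omega>. (\<Sum>k\<in>K. Y k \<omega>)^2) = (\<Sum>k\<in>K. expectation (\<lambda>\<omega>. (Y k \<omega>)^2))"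
proof -
  have square: "(\<lambda>\<omega>. (\<Sum>k\<in>K. Y k \<omega>)^2) = (\<lambda>\<omega>. \<Sum>k\<in>K. \<Sum>l\<in>K. Y k \<omega> * Y l \<omega>)"
    by (simp add: power2_eq_square sum_product)
  have cross_int: "integrable M (\<lambda>\<omega>. Y k \<omega> * Y l \<omega>)" if "k \<in> K" "l \<in> K" for k l
    using int2[OF that(1)] indep_vars_product_pair(1)[OF ind _ _ _ int[OF that(1)] int[OF that(2)]]
      that K by (cases "k = l") (auto simp: power2_eq_square)
  have cross_exp: "expectation (\<lambda>\<omega>. Y k \<omega> * Y l \<omega>)
      = (if k = l then expectation (\<lambda>\<omega>. (Y k \<omega>)^2) else 0)" if "k \<in> K" "l \<in> K" for k l
    using indep_vars_product_pair(2)[OF ind _ _ _ int[OF that(1)] int[OF that(2)]] that K centred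
    by (cases "k = l") (auto simp: power2_eq_square)
  show "integrable M (\<lambda>\<omega>. (\<Sum>k\<in>K. Y k \<omega>)^2)"
    unfolding square using cross_int by auto
  have "expectation (\<lambda>\<omega>. (\<Sum>k\<in>K. Y k \<omega>)^2)
      = (\<Sum>k\<in>K. \<Sum>l\<in>K. expectation (\<lambda>\<omega>. Y k \<omega> * Y l \<omega>))"
    unfolding square using cross_int
    by (simp add: Bochner_Integration.integral_sum Bochner_Integration.integrable_sum)
  also have "\<dots> = (\<Sum>k\<in>K. \<Sum>l\<in>K. (if k = l then expectation (\<lambda>\<omega>. (Y k \<omega>)^2) else 0))"
    using cross_exp by (intro sum.cong) auto
  also have "\<dots> = (\<Sum>k\<in>K. expectation (\<lambda>\<omega>. (Y k \<omega>)^2))"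
    using K by simp
  finally show "expectation (\<lambda>\<omega>. (\<Sum>k\<in>K. Y k \<omega>)^2) = (\<Sum>k\<in>K. expectation (\<lambda>\<omega>. (Y k \<omega>)^2))" .
qed

end

lemma AE_summable_if_abs_moments_summable:
  fixes Y :: "nat \<Rightarrow> 'a \<Rightarrow> real"
  assumes meas[measurable]: "\<And>t. Y t \<in> borel_measurable M"
    and finite_sum: "(\<Sum>t. \<integral>\<^sup>+\<omega>. ennreal \<bar>Y t \<omega>\<bar> \<partial>M) \<noteq> \<infinity>"
  shows "AE \<omega> in M. summable (\<lambda>t. Y t \<omega>)"
proof -
  have "(\<integral>\<^sup>+\<omega>. (\<Sum>t. ennreal \<bar>Y t \<omega>\<bar>) \<partial>M) \<noteq> \<infinity>"
    using finite_sum by (subst nn_integral_suminf) auto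
  then have "AE \<omega> in M. (\<Sum>t. ennreal \<bar>Y t \<omega>\<bar>) \<noteq> \<infinity>"
    by (intro nn_integral_PInf_AE) auto
  then show ?thesis
  proof (rule AE_mp, intro AE_I2 impI)
    fix \<omega> assume "(\<Sum>t. ennreal \<bar>Y t \<omega>\<bar>) \<noteq> \<infinity>"
    then have "summable (\<lambda>t. \<bar>Y t \<omega>\<bar>)" by (intro summable_suminf_not_top) auto
    then show "summable (\<lambda>t. Y t \<omega>)" by (rule summable_rabs_cancel)
  qed
qed

text \<open>The bad
  event is covered by a null set and the increasing union of the events
  "\<open>\<bar>X T\<bar> > r\<close> for all \<open>T \<ge> T0\<close>".\<close>
lemma (in prob_space) prob_limit_within_bound:
  fixes X :: "nat \<Rightarrow> 'a \<Rightarrow> real"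
  assumes meas[measurable]: "\<And>T. X T \<in> borel_measurable M"
    and conv: "AE \<omega> in M. convergent (\<lambda>T. X T \<omega>)"
    and tail: "\<And>T. prob {\<omega>\<in>space M. r < \<bar>X T \<omega>\<bar>} \<le> b"
  shows "prob {\<omega>\<in>space M. \<exists>l. (\<lambda>T. X T \<omega>) \<longlonglongrightarrow> l \<and> \<bar>l\<bar> \<le> r} \<ge> 1 - b"
    (is "prob ?E \<ge> _")
proof -
  define C where "C = {\<omega>\<in>space M. Cauchy (\<lambda>T. X T \<omega>)}"
  define B where "B T0 = {\<omega>\<in>space M. \<forall>T\<ge>T0. r < \<bar>X T \<omega>\<bar>}" for T0
  have E_eq: "?E = {\<omega>\<in>space M. Cauchy (\<lambda>T. X T \<omega>) \<and> \<bar>lim (\<lambda>T. X T \<omega>)\<bar> \<le> r}"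
    by (intro Collect_cong conj_cong refl) (metis Cauchy_convergent_iff convergent_def limI)
  have E_sets: "?E \<in> events" unfolding E_eq by measurable
  have C_sets: "C \<in> events" and B_sets: "\<And>T0. B T0 \<in> events"
    unfolding C_def B_def by measurable
  have "prob C = 1"
    using conv unfolding C_def Cauchy_convergent_iff
    by (subst prob_Collect_eq_1) (use C_sets in \<open>auto simp: C_def Cauchy_convergent_iff\<close>)
  then have null: "prob (space M - C) = 0" using prob_compl[OF C_sets] by simp
  have "(\<lambda>T0. prob (B T0)) \<longlonglongrightarrow> prob (\<Union>T0. B T0)"
    using B_sets by (intro Lim_measure_incseq) (auto simp: incseq_def B_def)
  moreover have "prob (B T0) \<le> b" for T0
  proof -
    have "prob (B T0) \<le> prob {\<omega>\<in>space M. r < \<bar>X T0 \<omega>\<bar>}"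
      by (rule finite_measure_mono) (auto simp: B_def)
    then show ?thesis using tail[of T0] by simp
  qed
  ultimately have union: "prob (\<Union>T0. B T0) \<le> b"
    by (intro LIMSEQ_le_const2) auto
  have "space M - ?E \<subseteq> (space M - C) \<union> (\<Union>T0. B T0)"
  proof
    fix \<omega> assume \<omega>: "\<omega> \<in> space M - ?E"
    show "\<omega> \<in> (space M - C) \<union> (\<Union>T0. B T0)"
    proof (cases "\<omega> \<in> C")
      case True
      then have "(\<lambda>T. X T \<omega>) \<longlonglongrightarrow> lim (\<lambda>T. X T \<omega>)"
        unfolding C_def by (simp add: Cauchy_convergent_iff convergent_LIMSEQ_iff)
      then have "(\<lambda>T. \<bar>X T \<omega>\<bar>) \<longlonglongrightarrow> \<bar>lim (\<lambda>T. X T \<omega>)\<bar>" by (rule tendsto_rabs)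
      moreover have "r < \<bar>lim (\<lambda>T. X T \<omega>)\<bar>"
        using \<omega> True unfolding C_def E_eq by auto
      ultimately have "eventually (\<lambda>T. r < \<bar>X T \<omega>\<bar>) sequentially"
        by (rule order_tendstoD(1))
      then show ?thesis using \<omega> by (auto simp: eventually_sequentially B_def)
    qed (use \<omega> in auto)
  qed
  then have "prob (space M - ?E) \<le> prob ((space M - C) \<union> (\<Union>T0. B T0))"
    using C_sets B_sets by (intro finite_measure_mono) auto
  also have "\<dots> \<le> prob (space M - C) + prob (\<Union>T0. B T0)"
    using C_sets B_sets by (intro measure_Un_le) auto
  also have "\<dots> \<le> b" using null union by simp
  finally show ?thesis using prob_compl[OF E_sets] by simp
qed

section \<open>The deterministic dynamics\<close>

lemma cs_state_sum_step:
  assumes N: "N \<ge> 1"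
  shows "(\<Sum>j<N. cs_state N \<sigma> \<theta>0 e (Suc t) j)
       = (\<Sum>j<N. cs_state N \<sigma> \<theta>0 e t j) + \<sigma> * (\<Sum>j<N. e j t)"
proof -
  define S where "S = (\<Sum>j<N. cs_state N \<sigma> \<theta>0 e t j)"
  define E where "E = (\<Sum>j<N. e j t)"
  have "(\<Sum>j<N. cs_state N \<sigma> \<theta>0 e (Suc t) j)
      = (\<Sum>j<N. (1-\<sigma>) * cs_state N \<sigma> \<theta>0 e t j + \<sigma> * ((S + E) / real N))"
    by (simp add: S_def E_def sum.distrib)
  also have "\<dots> = (1-\<sigma>) * S + real N * (\<sigma> * ((S + E) / real N))"
    by (simp add: sum.distrib sum_distrib_left[symmetric] S_def)
  also have "\<dots> = S + \<sigma> * E" using N by (simp add: field_simps)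
  finally show ?thesis by (simp add: S_def E_def)
qed

lemma cs_state_deviation_step:
  assumes N: "N \<ge> 1"
  shows "cs_state N \<sigma> \<theta>0 e (Suc t) i - (\<Sum>j<N. cs_state N \<sigma> \<theta>0 e (Suc t) j) / real N
     = (1-\<sigma>) * (cs_state N \<sigma> \<theta>0 e t i - (\<Sum>j<N. cs_state N \<sigma> \<theta>0 e t j) / real N)"
proof -
  define S where "S = (\<Sum>j<N. cs_state N \<sigma> \<theta>0 e t j)"
  define E where "E = (\<Sum>j<N. e j t)"
  define x where "x = cs_state N \<sigma> \<theta>0 e t i"
  have "cs_state N \<sigma> \<theta>0 e (Suc t) i = (1-\<sigma>) * x + \<sigma> * ((S + E) / real N)"
    by (simp add: S_def E_def x_def sum.distrib)
  moreover have "(\<Sum>j<N. cs_state N \<sigma> \<theta>0 e (Suc t) j) = S + \<sigma> * E"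
    unfolding S_def E_def by (rule cs_state_sum_step[OF N])
  ultimately show ?thesis
    using N by (simp add: field_simps flip: S_def x_def)
qed

lemma cs_state_closed_form:
  assumes N: "N \<ge> 1"
  shows "cs_state N \<sigma> \<theta>0 e t i = (\<Sum>i<N. \<theta>0 i) / real N + \<sigma> / real N * (\<Sum>s<t. \<Sum>j<N. e j s)
     + (1-\<sigma>)^t * (\<theta>0 i - (\<Sum>i<N. \<theta>0 i) / real N)"
proof -
  define m where "m t = (\<Sum>j<N. cs_state N \<sigma> \<theta>0 e t j) / real N" for t
  have m_step: "m (Suc t) = m t + \<sigma> / real N * (\<Sum>j<N. e j t)" for t
    unfolding m_def cs_state_sum_step[OF N] using N by (simp add: field_simps)
  have m_closed: "m t = m 0 + \<sigma> / real N * (\<Sum>s<t. \<Sum>j<N. e j s)" for t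
    by (induction t) (simp_all add: m_step algebra_simps)
  have deviation: "cs_state N \<sigma> \<theta>0 e t i - m t = (1-\<sigma>)^t * (\<theta>0 i - m 0)" for t
  proof (induction t)
    case (Suc t)
    then show ?case unfolding m_def cs_state_deviation_step[OF N] by (simp add: m_def)
  qed (simp add: m_def)
  have "m 0 = (\<Sum>i<N. \<theta>0 i) / real N" by (simp add: m_def)
  then show ?thesis using m_closed[of t] deviation[of t] by (simp add: algebra_simps)
qed

text \<open>Since the initial deviations die out, the clients reach a common limit within
  \<open>r\<close> of the initial average iff the scaled accumulated noise converges to a limit of
  absolute value at most \<open>r\<close>.\<close>
lemma cs_consensus_iff_noise_limit:
  assumes N: "N \<ge> 1" and \<sigma>: "0 < \<sigma>" "\<sigma> < 1"
  shows "(\<exists>\<theta>s. (\<forall>i<N. (\<lambda>t. cs_state N \<sigma> \<theta>0 e t i) \<longlonglongrightarrow> \<theta>s) \<and>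
            \<bar>\<theta>s - (\<Sum>i<N. \<theta>0 i) / real N\<bar> \<le> r)
     \<longleftrightarrow> (\<exists>l. (\<lambda>t. \<sigma> / real N * (\<Sum>s<t. \<Sum>j<N. e j s)) \<longlonglongrightarrow> l \<and> \<bar>l\<bar> \<le> r)"
proof -
  define m where "m = (\<Sum>i<N. \<theta>0 i) / real N"
  define D where "D t = \<sigma> / real N * (\<Sum>s<t. \<Sum>j<N. e j s)" for t
  have closed: "cs_state N \<sigma> \<theta>0 e t i = m + D t + (1-\<sigma>)^t * (\<theta>0 i - m)" for t i
    unfolding m_def D_def by (rule cs_state_closed_form[OF N])
  have decay: "(\<lambda>t. (1-\<sigma>)^t * a) \<longlonglongrightarrow> 0" for a :: real
    using \<sigma> by (intro tendsto_mult_left_zero LIMSEQ_power_zero) simp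
  show ?thesis
  proof
    assume "\<exists>\<theta>s. (\<forall>i<N. (\<lambda>t. cs_state N \<sigma> \<theta>0 e t i) \<longlonglongrightarrow> \<theta>s) \<and> \<bar>\<theta>s - (\<Sum>i<N. \<theta>0 i) / real N\<bar> \<le> r"
    then obtain \<theta>s where lim: "(\<lambda>t. cs_state N \<sigma> \<theta>0 e t 0) \<longlonglongrightarrow> \<theta>s" and bound: "\<bar>\<theta>s - m\<bar> \<le> r"
      using N unfolding m_def by auto
    have "(\<lambda>t. cs_state N \<sigma> \<theta>0 e t 0 - m - (1-\<sigma>)^t * (\<theta>0 0 - m)) \<longlonglongrightarrow> \<theta>s - m - 0"
      by (intro tendsto_diff lim decay tendsto_const)
    then have "D \<longlonglongrightarrow> \<theta>s - m" unfolding closed by simp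
    then show "\<exists>l. (\<lambda>t. \<sigma> / real N * (\<Sum>s<t. \<Sum>j<N. e j s)) \<longlonglongrightarrow> l \<and> \<bar>l\<bar> \<le> r"
      using bound unfolding D_def by blast
  next
    assume "\<exists>l. (\<lambda>t. \<sigma> / real N * (\<Sum>s<t. \<Sum>j<N. e j s)) \<longlonglongrightarrow> l \<and> \<bar>l\<bar> \<le> r"
    then obtain l where lim: "D \<longlonglongrightarrow> l" and bound: "\<bar>l\<bar> \<le> r" unfolding D_def by blast
    have "(\<lambda>t. cs_state N \<sigma> \<theta>0 e t i) \<longlonglongrightarrow> m + l + 0" for i
      unfolding closed by (intro tendsto_add lim decay tendsto_const)
    then show "\<exists>\<theta>s. (\<forall>i<N. (\<lambda>t. cs_state N \<sigma> \<theta>0 e t i) \<longlonglongrightarrow> \<theta>s) \<and> \<bar>\<theta>s - (\<Sum>i<N. \<theta>0 i) / real N\<bar> \<le> r"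
      using bound unfolding m_def by force
  qed
qed

locale laplace_noise = prob_space M
  for M :: "'a measure" and \<eta> :: "nat \<Rightarrow> nat \<Rightarrow> 'a \<Rightarrow> real" and N :: nat and c q :: real +
  assumes c_pos: "0 < c" and q_pos: "0 < q" and q_less_1: "q < 1"
    and indep: "indep_vars (\<lambda>_. borel) (\<lambda>(i, t). \<eta> i t) ({..<N} \<times> UNIV)"
    and laplace: "\<And>i t. i < N \<Longrightarrow>
       distributed M lborel (\<eta> i t) (\<lambda>x. ennreal (laplace_density (c * q ^ t) x))"
begin

lemma noise_moments:
  assumes "i < N"
  shows "\<eta> i t \<in> borel_measurable M"
    and "integrable M (\<eta> i t)" and "expectation (\<eta> i t) = 0"
    and "integrable M (\<lambda>\<omega>. (\<eta> i t \<omega>)^2)" and "expectation (\<lambda>\<omega>. (\<eta> i t \<omega>)^2) = 2 * (c * q^t)^2"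
    and "(\<integral>\<^sup>+\<omega>. ennreal \<bar>\<eta> i t \<omega>\<bar> \<partial>M) = ennreal (c * q^t)"
  using laplace_distributed_moments[OF laplace[OF assms]] c_pos q_pos by simp_all

definition cumulative_noise :: "nat \<Rightarrow> 'a \<Rightarrow> real" where
  "cumulative_noise T \<omega> = (\<Sum>s<T. \<Sum>j<N. \<eta> j s \<omega>)"

lemma cumulative_noise_measurable[measurable]: "cumulative_noise T \<in> borel_measurable M"
  unfolding cumulative_noise_def[abs_def] using noise_moments(1) by measurable

text \<open>The scales \<open>c q^s\<close> are summable, so each client's noise series converges almost
  surely, and hence so does the total noise.\<close>
lemma cumulative_noise_converges: "AE \<omega> in M. convergent (\<lambda>T. cumulative_noise T \<omega>)"
proof -
  have "(\<lambda>t. c * q^t) sums (c * (1 / (1 - q)))"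
    using q_pos q_less_1 by (intro sums_mult geometric_sums) auto
  then have "(\<Sum>t. ennreal (c * q^t)) = ennreal (c / (1 - q))"
    using c_pos q_pos by (subst suminf_ennreal2) (auto simp: sums_iff)
  then have "AE \<omega> in M. summable (\<lambda>t. \<eta> j t \<omega>)" if "j < N" for j
    using noise_moments[OF that] by (intro AE_summable_if_abs_moments_summable) auto
  then have "AE \<omega> in M. \<forall>j\<in>{..<N}. summable (\<lambda>t. \<eta> j t \<omega>)"
    by (intro AE_finite_allI) auto
  then show ?thesis
  proof (rule AE_mp, intro AE_I2 impI)
    fix \<omega> assume "\<forall>j\<in>{..<N}. summable (\<lambda>t. \<eta> j t \<omega>)"
    then have "summable (\<lambda>s. \<Sum>j<N. \<eta> j s \<omega>)" by (intro summable_sum) auto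
    then show "convergent (\<lambda>T. cumulative_noise T \<omega>)"
      unfolding cumulative_noise_def by (simp add: summable_iff_convergent)
  qed
qed

text \<open>The second moment of the total noise is the sum of the individual variances
  \<open>2 c^2 q^(2s)\<close>, which is at most \<open>N \<cdot> 2 c^2 / (1 - q^2)\<close> uniformly in \<open>T\<close>.\<close>
lemma cumulative_noise_second_moment:
  shows "integrable M (\<lambda>\<omega>. (cumulative_noise T \<omega>)^2)"
    and "expectation (\<lambda>\<omega>. (cumulative_noise T \<omega>)^2) \<le> real N * (2 * c^2 / (1 - q^2))"
proof -
  define K where "K = {..<N} \<times> {..<T}"
  define Y where "Y = (\<lambda>(i, t). \<eta> i t)"
  have K: "finite K" "K \<subseteq> {..<N} \<times> UNIV" unfolding K_def by auto
  have noise_sum: "cumulative_noise T \<omega> = (\<Sum>k\<in>K. Y k \<omega>)" for \<omega>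
    unfolding cumulative_noise_def K_def Y_def
    by (subst sum.swap) (simp add: sum.cartesian_product case_prod_unfold)
  have moments: "integrable M (Y k)" "expectation (Y k) = 0" "integrable M (\<lambda>\<omega>. (Y k \<omega>)^2)"
    "expectation (\<lambda>\<omega>. (Y k \<omega>)^2) = 2 * (c * q^snd k)^2" if "k \<in> K" for k
    using noise_moments[of "fst k" "snd k"] that by (auto simp: K_def Y_def case_prod_beta)
  note second = indep_centred_sum_second_moment[OF indep[folded Y_def] K moments(1-3)]
  show "integrable M (\<lambda>\<omega>. (cumulative_noise T \<omega>)^2)"
    unfolding noise_sum using second(1) by simp
  have q2: "0 < q^2" "q^2 < 1" using q_pos q_less_1 by (auto simp: power_less_one_iff)
  have "expectation (\<lambda>\<omega>. (cumulative_noise T \<omega>)^2) = (\<Sum>k\<in>K. expectation (\<lambda>\<omega>. (Y k \<omega>)^2))"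
    unfolding noise_sum by (rule second(2))
  also have "\<dots> = (\<Sum>k\<in>K. 2 * (c * q^snd k)^2)"
    using moments(4) by (intro sum.cong) auto
  also have "\<dots> = real N * (2 * c^2 * (\<Sum>s<T. (q^2)^s))"
    unfolding K_def by (simp only: sum.cartesian_product')
      (simp add: sum_distrib_left power_mult_distrib power_mult[symmetric] mult_ac)
  also have "\<dots> = real N * (2 * c^2 * ((1 - (q^2)^T) / (1 - q^2)))"
    using q2 by (simp add: sum_gp_strict)
  also have "\<dots> \<le> real N * (2 * c^2 * (1 / (1 - q^2)))"
    using q2 by (intro mult_left_mono divide_right_mono) auto
  finally show "expectation (\<lambda>\<omega>. (cumulative_noise T \<omega>)^2) \<le> real N * (2 * c^2 / (1 - q^2))"
    by simp
qed

lemma cumulative_noise_tail: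
  assumes "0 < r"
  shows "prob {\<omega>\<in>space M. r < \<bar>a * cumulative_noise T \<omega>\<bar>}
       \<le> a^2 * (real N * (2 * c^2 / (1 - q^2))) / r^2"
proof -
  have "prob {\<omega>\<in>space M. r < \<bar>a * cumulative_noise T \<omega>\<bar>}
      \<le> prob {\<omega>\<in>space M. r \<le> \<bar>a * cumulative_noise T \<omega>\<bar>}"
    by (rule finite_measure_mono) auto
  also have "\<dots> \<le> expectation (\<lambda>\<omega>. (a * cumulative_noise T \<omega>)^2) / r^2"
    using assms cumulative_noise_second_moment(1)
    by (intro second_moment_method) (auto simp: power_mult_distrib)
  also have "\<dots> = a^2 * expectation (\<lambda>\<omega>. (cumulative_noise T \<omega>)^2) / r^2"
    by (simp add: power_mult_distrib)
  also have "\<dots> \<le> a^2 * (real N * (2 * c^2 / (1 - q^2))) / r^2"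
    using cumulative_noise_second_moment(2)
    by (intro divide_right_mono mult_left_mono) auto
  finally show ?thesis .
qed

end

theorem mainTheorem4:
  fixes M :: "'a measure" and \<eta> :: "nat \<Rightarrow> nat \<Rightarrow> 'a \<Rightarrow> real"
    and N :: nat and \<sigma> c q b :: real and \<theta>0 :: "nat \<Rightarrow> real"
  assumes "prob_space M"
    and "N \<ge> 1"
    and "0 < \<sigma>" "\<sigma> < 1" "0 < c" "0 < q" "q < 1"
    and "0 < b" "b < 1"
    and indep: "prob_space.indep_vars M (\<lambda>_. borel) (\<lambda>(i, t). \<eta> i t) ({..<N} \<times> UNIV)"
    and lap: "\<And>i t. i < N \<Longrightarrow>
       distributed M lborel (\<eta> i t) (\<lambda>x. ennreal (laplace_density (c * q ^ t) x))"
  shows "measure M {\<omega> \<in> space M. \<exists>\<theta>s.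
            (\<forall>i<N. (\<lambda>t. cs_state N \<sigma> \<theta>0 (\<lambda>j s. \<eta> j s \<omega>) t i) \<longlonglongrightarrow> \<theta>s) \<and>
            \<bar>\<theta>s - (\<Sum>i<N. \<theta>0 i) / real N\<bar>
              \<le> sqrt 2 * c * \<sigma> / sqrt (b * real N * (1 - q\<^sup>2))}
         \<ge> 1 - b"
proof -
  interpret laplace_noise M \<eta> N c q
    using assms unfolding laplace_noise_def laplace_noise_axioms_def by auto
  define r where "r = sqrt 2 * c * \<sigma> / sqrt (b * real N * (1 - q\<^sup>2))"
  define D where "D T \<omega> = \<sigma> / real N * cumulative_noise T \<omega>" for T \<omega>
  have q2: "q^2 < 1" using assms by (simp add: power_less_one_iff)
  have r_pos: "0 < r" unfolding r_def using assms q2 by auto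
  have chebyshev_bound: "(\<sigma> / real N)^2 * (real N * (2 * c^2 / (1 - q^2))) / r^2 = b"
    unfolding r_def using assms q2 by (simp add: power_divide power_mult_distrib field_simps power2_eq_square)
  have "prob {\<omega>\<in>space M. \<exists>l. (\<lambda>T. D T \<omega>) \<longlonglongrightarrow> l \<and> \<bar>l\<bar> \<le> r} \<ge> 1 - b"
  proof (rule prob_limit_within_bound)
    show "D T \<in> borel_measurable M" for T unfolding D_def by measurable
    show "AE \<omega> in M. convergent (\<lambda>T. D T \<omega>)"
      using cumulative_noise_converges unfolding D_def
      by (rule eventually_mono) (intro convergent_mult convergent_const)
    show "prob {\<omega>\<in>space M. r < \<bar>D T \<omega>\<bar>} \<le> b" for T
      using cumulative_noise_tail[OF r_pos, of "\<sigma> / real N" T] unfolding D_def chebyshev_bound .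
  qed
  then show ?thesis
    using cs_consensus_iff_noise_limit[OF \<open>N \<ge> 1\<close> \<open>0 < \<sigma>\<close> \<open>\<sigma> < 1\<close>]
    unfolding r_def D_def cumulative_noise_def by simp
qed

end
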